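(* $\mathsf{LDL}\equiv_{sW}\mathsf{C}_\mathbb{N}$.
   Context: A represented space is a pair $(X,\delta_X)$ with $\delta_X:\subseteq\mathbb{N}^\mathbb{N}\to X$ a partial surjection. A realizer of $f:\subseteq X\rightrightarrows Y$ is a partial $F$ with $\delta_Y F(p)\in f(\delta_X(p))$ for all $p\in\mathrm{dom}(f\circ\delta_X)$. $f\le_{sW}g$ if there are computable partial $H,K:\subseteq\mathbb{N}^\mathbb{N}\to\mathbb{N}^\mathbb{N}$ such that $HGK$ realizes $f$ for every realizer $G$ of $g$; $\equiv_{sW}$ is the induced equivalence. $\mathcal{A}_-(X)$ denotes closed subsets of $X$ represented by negative information (for $\mathbb N$: a name of $A$ enumerates $\mathbb N\setminus A$; for $2^\mathbb N$: a name enumerates words $w$ such that the union of the cylinders $w2^\mathbb N$ is $2^\mathbb N\setminus A$). $\mathsf C_\mathbb N:\subseteq\mathcal A_-(\mathbb N)\rightrightarrows\mathbb N$, $A\mapsto A$, defined on nonempty $A$. $\mu$ is the uniform measure on $2^\mathbb N$ with $\mu(w2^\mathbb N)=2^{-|w|}$. The Lebesgue Density Lemma problem is $\mathsf{LDL}:\subseteq\mathcal A_-(2^\mathbb N)\times\mathbb N\rightrightarrows\{0,1\}^*$, $(A,k)\mapsto\{w\in\{0,1\}^*:\mu(A\cap w2^\mathbb N)/2^{-|w|}\ge 1-2^{-k}\}$, with domain $\{(A,k):\mu(A)>0\}$. *)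

theory Defs
  imports "HOL-Probability.Probability"
begin

datatype rf = Zero | Succ | Proj nat | Query | Comp rf "rf list" | PrimRec rf rf | Mu rf

inductive rf_eval :: "(nat \<Rightarrow> nat) \<Rightarrow> rf \<Rightarrow> nat list \<Rightarrow> nat \<Rightarrow> bool" for p where
  zero: "rf_eval p Zero xs 0"
| succ: "rf_eval p Succ (x # xs) (Suc x)"
| proj: "i < length xs \<Longrightarrow> rf_eval p (Proj i) xs (xs ! i)"
| query: "rf_eval p Query (x # xs) (p x)"
| comp: "length ys = length gs \<Longrightarrow> (\<forall>i<length gs. rf_eval p (gs ! i) xs (ys ! i))
           \<Longrightarrow> rf_eval p f ys z \<Longrightarrow> rf_eval p (Comp f gs) xs z"
| prec0: "rf_eval p f xs y \<Longrightarrow> rf_eval p (PrimRec f g) (0 # xs) y"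
| precS: "rf_eval p (PrimRec f g) (n # xs) y \<Longrightarrow> rf_eval p g (n # y # xs) z
           \<Longrightarrow> rf_eval p (PrimRec f g) (Suc n # xs) z"
| mu: "rf_eval p f (n # xs) 0 \<Longrightarrow> (\<forall>m<n. \<exists>y. rf_eval p f (m # xs) (Suc y))
           \<Longrightarrow> rf_eval p (Mu f) xs n"

type_synonym baire = "nat \<Rightarrow> nat"

definition computable :: "(baire \<Rightarrow> baire option) \<Rightarrow> bool" where
  "computable F \<longleftrightarrow> (\<exists>t. \<forall>p q. F p = Some q \<longrightarrow> (\<forall>n. rf_eval p t [n] (q n)))"

text \<open>A representation is a partial map delta :: baire => 'a option; a multi-valued problem
  is given by its domain D and its value map f (f x = set of admissible outputs).\<close>
definition realizes ::
  "(baire \<Rightarrow> 'a option) \<Rightarrow> (baire \<Rightarrow> 'b option) \<Rightarrow> 'a set \<Rightarrow> ('a \<Rightarrow> 'b set)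
   \<Rightarrow> (baire \<Rightarrow> baire option) \<Rightarrow> bool" where
  "realizes dX dY D f G \<longleftrightarrow>
     (\<forall>p x. dX p = Some x \<and> x \<in> D \<longrightarrow> (\<exists>q y. G p = Some q \<and> dY q = Some y \<and> y \<in> f x))"

definition sW_le ::
  "(baire \<Rightarrow> 'a option) \<Rightarrow> (baire \<Rightarrow> 'b option) \<Rightarrow> 'a set \<Rightarrow> ('a \<Rightarrow> 'b set)
   \<Rightarrow> (baire \<Rightarrow> 'c option) \<Rightarrow> (baire \<Rightarrow> 'd option) \<Rightarrow> 'c set \<Rightarrow> ('c \<Rightarrow> 'd set) \<Rightarrow> bool" where
  "sW_le dX dY Df f dU dV Dg g \<longleftrightarrow>
     (\<exists>H K. computable H \<and> computable K \<and>
        (\<forall>G. realizes dU dV Dg g G \<longrightarrow>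
             realizes dX dY Df f (\<lambda>p. Option.bind (K p) (\<lambda>q. Option.bind (G q) H))))"

definition sW_equiv ::
  "(baire \<Rightarrow> 'a option) \<Rightarrow> (baire \<Rightarrow> 'b option) \<Rightarrow> 'a set \<Rightarrow> ('a \<Rightarrow> 'b set)
   \<Rightarrow> (baire \<Rightarrow> 'c option) \<Rightarrow> (baire \<Rightarrow> 'd option) \<Rightarrow> 'c set \<Rightarrow> ('c \<Rightarrow> 'd set) \<Rightarrow> bool" where
  "sW_equiv dX dY Df f dU dV Dg g \<longleftrightarrow>
     sW_le dX dY Df f dU dV Dg g \<and> sW_le dU dV Dg g dX dY Df f"

text \<open>Bijective coding of binary words by natural numbers.\<close>
fun decode_word :: "nat \<Rightarrow> bool list" where
  "decode_word 0 = []"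
| "decode_word (Suc n) = even n # decode_word (n div 2)"

definition delta_nat :: "baire \<Rightarrow> nat option" where
  "delta_nat p = Some (p 0)"

definition delta_word :: "baire \<Rightarrow> bool list option" where
  "delta_word p = Some (decode_word (p 0))"

text \<open>Negative information for closed subsets of N: p i = Suc n enumerates n into the complement.\<close>
definition delta_AN :: "baire \<Rightarrow> nat set option" where
  "delta_AN p = Some {n. \<forall>i. p i \<noteq> Suc n}"

definition cyl :: "bool list \<Rightarrow> (nat \<Rightarrow> bool) set" where
  "cyl w = {x. \<forall>i<length w. x i = w ! i}"

text \<open>Negative information for closed subsets of Cantor space: p i = Suc c enumerates the word
  decode_word c; the named set is the complement of the union of the enumerated cylinders.\<close>
definition delta_AC :: "baire \<Rightarrow> (nat \<Rightarrow> bool) set option" where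
  "delta_AC p = Some (- (\<Union>i\<in>{i. p i \<noteq> 0}. cyl (decode_word (p i - 1))))"

definition delta_pair :: "(baire \<Rightarrow> 'a option) \<Rightarrow> (baire \<Rightarrow> 'b option) \<Rightarrow> baire \<Rightarrow> ('a \<times> 'b) option" where
  "delta_pair d1 d2 p =
     (case d1 (\<lambda>i. p (2 * i)) of None \<Rightarrow> None
      | Some x \<Rightarrow> (case d2 (\<lambda>i. p (2 * i + 1)) of None \<Rightarrow> None | Some y \<Rightarrow> Some (x, y)))"

definition cantor :: "(nat \<Rightarrow> bool) measure" where
  "cantor = Pi\<^sub>M UNIV (\<lambda>_. measure_pmf (bernoulli_pmf (1/2)))"

definition mu :: "(nat \<Rightarrow> bool) set \<Rightarrow> real" where
  "mu S = measure cantor S"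

definition CN_dom :: "nat set set" where
  "CN_dom = {A. A \<noteq> {}}"

definition CN :: "nat set \<Rightarrow> nat set" where
  "CN A = A"

definition LDL_dom :: "((nat \<Rightarrow> bool) set \<times> nat) set" where
  "LDL_dom = {(A, k). mu A > 0}"

definition LDL :: "(nat \<Rightarrow> bool) set \<times> nat \<Rightarrow> bool list set" where
  "LDL Ak = (case Ak of (A, k) \<Rightarrow>
     {w. mu (A \<inter> cyl w) / (1/2) ^ length w \<ge> 1 - (1/2) ^ k})"

end

theory Submission
  imports Defs "HOL-Library.Sublist"
begin

text \<open>For C_N \<le> LDL, a set A of naturals, named by an enumeration of its complement, becomes the
  closed set of binary sequences whose first True lies at a position in A (or that have none).
  It has positive measure as soon as A is nonempty. If it has density at least 3/4 in the
  cylinder of w, let n be the number of leading Falses of w: were n outside A, the set would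
  miss the cylinder of w entirely (if w continues with True) or be confined to the half of it
  continuing with False (if w ends after them). So n is in A.

  For LDL \<le> C_N, a word w is a correct answer iff the complement of A, an effectively open set,
  meets the cylinder of w in measure at most 2^-(k+|w|). Approximating the complement from
  inside by finite unions of cylinders makes every violation visible at a finite stage, so the
  set of non-refuted words is co-c.e. and all its members are answers. It is nonempty by a
  counting form of the Lebesgue density lemma, and picking one of its elements is an instance
  of C_N.\<close>

section \<open>Computable functionals of several arguments\<close>

definition computes :: "nat \<Rightarrow> rf \<Rightarrow> (baire \<Rightarrow> nat list \<Rightarrow> nat) \<Rightarrow> bool" where
  "computes k t F \<longleftrightarrow> (\<forall>p xs. length xs = k \<longrightarrow> rf_eval p t xs (F p xs))"

definition computable_fn :: "nat \<Rightarrow> (baire \<Rightarrow> nat list \<Rightarrow> nat) \<Rightarrow> bool" where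
  "computable_fn k F \<longleftrightarrow> (\<exists>t. computes k t F)"

lemma computable_fn_cong:
  "computable_fn k F \<Longrightarrow> (\<And>p xs. length xs = k \<Longrightarrow> F p xs = G p xs) \<Longrightarrow> computable_fn k G"
  unfolding computable_fn_def computes_def by metis

lemma computable_fn_zero: "computable_fn k (\<lambda>p xs. 0)"
  unfolding computable_fn_def computes_def by (blast intro: rf_eval.zero)

lemma computable_fn_proj: "i < k \<Longrightarrow> computable_fn k (\<lambda>p xs. xs ! i)"
  unfolding computable_fn_def computes_def by (blast intro: rf_eval.proj)

lemma computable_fn_unary_Suc: "computable_fn 1 (\<lambda>p xs. Suc (xs ! 0))"
  unfolding computable_fn_def computes_def
proof (intro exI allI impI)
  fix p and xs :: "nat list" assume "length xs = 1"
  then obtain x where "xs = [x]" by (cases xs) auto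
  then show "rf_eval p Succ xs (Suc (xs ! 0))" using rf_eval.succ[of p x "[]"] by simp
qed

lemma computable_fn_unary_oracle: "computable_fn 1 (\<lambda>p xs. p (xs ! 0))"
  unfolding computable_fn_def computes_def
proof (intro exI allI impI)
  fix p and xs :: "nat list" assume "length xs = 1"
  then obtain x where "xs = [x]" by (cases xs) auto
  then show "rf_eval p Query xs (p (xs ! 0))" using rf_eval.query[of p x "[]"] by simp
qed

lemma computable_fn_comp:
  assumes F: "computable_fn (length Gs) F" and Gs: "\<forall>G\<in>set Gs. computable_fn k G"
  shows "computable_fn k (\<lambda>p xs. F p (map (\<lambda>G. G p xs) Gs))"
proof -
  obtain f where f: "computes (length Gs) f F" using F unfolding computable_fn_def by blast
  obtain tG where tG: "\<And>G. G \<in> set Gs \<Longrightarrow> computes k (tG G) G"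
    using Gs unfolding computable_fn_def by metis
  have "computes k (Comp f (map tG Gs)) (\<lambda>p xs. F p (map (\<lambda>G. G p xs) Gs))"
    unfolding computes_def
  proof (intro allI impI)
    fix p and xs :: "nat list" assume len: "length xs = k"
    show "rf_eval p (Comp f (map tG Gs)) xs (F p (map (\<lambda>G. G p xs) Gs))"
    proof (rule rf_eval.comp)
      show "\<forall>i<length (map tG Gs). rf_eval p (map tG Gs ! i) xs (map (\<lambda>G. G p xs) Gs ! i)"
        using tG len unfolding computes_def by (auto simp: nth_mem)
      show "rf_eval p f (map (\<lambda>G. G p xs) Gs) (F p (map (\<lambda>G. G p xs) Gs))"
        using f unfolding computes_def by simp
    qed simp
  qed
  then show ?thesis unfolding computable_fn_def by blast
qed

lemma computable_fn_primrec:
  assumes F: "computable_fn k F" and G: "computable_fn (Suc (Suc k)) G"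
    and H0: "\<And>p ys. length ys = k \<Longrightarrow> H p (0 # ys) = F p ys"
    and HS: "\<And>p n ys. length ys = k \<Longrightarrow> H p (Suc n # ys) = G p (n # H p (n # ys) # ys)"
  shows "computable_fn (Suc k) H"
proof -
  obtain f where f: "computes k f F" using F unfolding computable_fn_def by blast
  obtain g where g: "computes (Suc (Suc k)) g G" using G unfolding computable_fn_def by blast
  have "rf_eval p (PrimRec f g) (n # ys) (H p (n # ys))" if "length ys = k" for p n ys
  proof (induction n)
    case 0
    then show ?case using f that H0 unfolding computes_def by (auto intro: rf_eval.prec0)
  next
    case (Suc n)
    then show ?case using g that HS unfolding computes_def by (auto intro: rf_eval.precS)
  qed
  then have "computes (Suc k) (PrimRec f g) H"
    unfolding computes_def by (metis length_Suc_conv)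
  then show ?thesis unfolding computable_fn_def by blast
qed

lemma computable_fn_minimize:
  assumes F: "computable_fn (Suc k) F"
    and ex: "\<And>p xs. length xs = k \<Longrightarrow> \<exists>n. F p (n # xs) = 0"
  shows "computable_fn k (\<lambda>p xs. LEAST n. F p (n # xs) = 0)"
proof -
  obtain f where f: "computes (Suc k) f F" using F unfolding computable_fn_def by blast
  have "computes k (Mu f) (\<lambda>p xs. LEAST n. F p (n # xs) = 0)"
    unfolding computes_def
  proof (intro allI impI)
    fix p and xs :: "nat list" assume len: "length xs = k"
    let ?n = "LEAST n. F p (n # xs) = 0"
    have "F p (?n # xs) = 0" using ex[OF len] by (rule LeastI_ex)
    moreover have "\<exists>y. F p (m # xs) = Suc y" if "m < ?n" for m
      using not_less_Least[OF that] by (cases "F p (m # xs)") auto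
    ultimately show "rf_eval p (Mu f) xs ?n"
      using f len unfolding computes_def by (intro rf_eval.mu) (metis length_Cons)+
  qed
  then show ?thesis unfolding computable_fn_def by blast
qed

lemma computable_of_computable_fn:
  "computable_fn 1 F \<Longrightarrow> computable (\<lambda>p. Some (\<lambda>n. F p [n]))"
  unfolding computable_fn_def computes_def computable_def by force

lemma computable_fn_comp1:
  "computable_fn 1 F \<Longrightarrow> computable_fn k G \<Longrightarrow> computable_fn k (\<lambda>p xs. F p [G p xs])"
  using computable_fn_comp[of "[G]" F k] by simp

lemma computable_fn_comp2:
  "computable_fn 2 F \<Longrightarrow> computable_fn k G1 \<Longrightarrow> computable_fn k G2 \<Longrightarrow>
   computable_fn k (\<lambda>p xs. F p [G1 p xs, G2 p xs])"
  using computable_fn_comp[of "[G1, G2]" F k] by (simp add: numeral_2_eq_2)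

lemma computable_fn_Suc: "computable_fn k G \<Longrightarrow> computable_fn k (\<lambda>p xs. Suc (G p xs))"
  using computable_fn_comp1[OF computable_fn_unary_Suc] by simp

lemma computable_fn_oracle: "computable_fn k G \<Longrightarrow> computable_fn k (\<lambda>p xs. p (G p xs))"
  using computable_fn_comp1[OF computable_fn_unary_oracle] by simp

lemma computable_fn_const: "computable_fn k (\<lambda>p xs. c)"
  by (induction c) (simp_all add: computable_fn_zero computable_fn_Suc)

lemma computable_fn_binary_add: "computable_fn 2 (\<lambda>p xs. xs ! 0 + xs ! 1)"
  using computable_fn_primrec[of 1 "\<lambda>p xs. xs ! 0" "\<lambda>p xs. Suc (xs ! 1)"]
  by (simp add: computable_fn_proj computable_fn_Suc numeral_2_eq_2)

lemma computable_fn_add: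
  "computable_fn k G1 \<Longrightarrow> computable_fn k G2 \<Longrightarrow> computable_fn k (\<lambda>p xs. G1 p xs + G2 p xs)"
  using computable_fn_comp2[OF computable_fn_binary_add] by simp

lemma computable_fn_unary_pred: "computable_fn 1 (\<lambda>p xs. xs ! 0 - 1)"
  using computable_fn_primrec[of 0 "\<lambda>p xs. 0" "\<lambda>p xs. xs ! 0"]
  by (simp add: computable_fn_zero computable_fn_proj)

lemma computable_fn_binary_diff: "computable_fn 2 (\<lambda>p xs. xs ! 1 - xs ! 0)"
proof -
  have "computable_fn 3 (\<lambda>p xs. xs ! 1 - 1)"
    using computable_fn_comp1[OF computable_fn_unary_pred computable_fn_proj[of 1 3]] by simp
  then show ?thesis
    using computable_fn_primrec[of 1 "\<lambda>p xs. xs ! 0" "\<lambda>p xs. xs ! 1 - 1"]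
    by (simp add: computable_fn_proj numeral_2_eq_2 numeral_3_eq_3)
qed

lemma computable_fn_diff:
  "computable_fn k G1 \<Longrightarrow> computable_fn k G2 \<Longrightarrow> computable_fn k (\<lambda>p xs. G1 p xs - G2 p xs)"
  using computable_fn_comp2[OF computable_fn_binary_diff, of k G2 G1] by simp

lemma computable_fn_binary_mult: "computable_fn 2 (\<lambda>p xs. xs ! 0 * xs ! 1)"
proof -
  have "computable_fn 3 (\<lambda>p xs. xs ! 1 + xs ! 2)"
    by (intro computable_fn_add computable_fn_proj) auto
  then show ?thesis
    using computable_fn_primrec[of 1 "\<lambda>p xs. 0" "\<lambda>p xs. xs ! 1 + xs ! 2"]
    by (simp add: computable_fn_zero numeral_2_eq_2 numeral_3_eq_3)
qed

lemma computable_fn_mult: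
  "computable_fn k G1 \<Longrightarrow> computable_fn k G2 \<Longrightarrow> computable_fn k (\<lambda>p xs. G1 p xs * G2 p xs)"
  using computable_fn_comp2[OF computable_fn_binary_mult] by simp

lemma computable_fn_unary_pow2: "computable_fn 1 (\<lambda>p xs. 2 ^ (xs ! 0))"
proof -
  have "computable_fn 2 (\<lambda>p xs. xs ! 1 + xs ! 1)"
    by (intro computable_fn_add computable_fn_proj) auto
  then show ?thesis
    using computable_fn_primrec[of 0 "\<lambda>p xs. 1" "\<lambda>p xs. xs ! 1 + xs ! 1"]
    by (simp add: computable_fn_const numeral_2_eq_2)
qed

lemma computable_fn_pow2: "computable_fn k G \<Longrightarrow> computable_fn k (\<lambda>p xs. 2 ^ G p xs)"
  using computable_fn_comp1[OF computable_fn_unary_pow2] by simp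

lemma computable_fn_eq:
  "computable_fn k G1 \<Longrightarrow> computable_fn k G2 \<Longrightarrow>
   computable_fn k (\<lambda>p xs. of_bool (G1 p xs = G2 p xs))"
  by (rule computable_fn_cong[where F="\<lambda>p xs. 1 - ((G1 p xs - G2 p xs) + (G2 p xs - G1 p xs))"])
    (auto intro!: computable_fn_diff computable_fn_add computable_fn_const)

lemma computable_fn_le:
  "computable_fn k G1 \<Longrightarrow> computable_fn k G2 \<Longrightarrow>
   computable_fn k (\<lambda>p xs. of_bool (G1 p xs \<le> G2 p xs))"
  by (rule computable_fn_cong[where F="\<lambda>p xs. 1 - (G1 p xs - G2 p xs)"])
    (auto intro!: computable_fn_diff computable_fn_const)

lemma computable_fn_less:
  "computable_fn k G1 \<Longrightarrow> computable_fn k G2 \<Longrightarrow>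
   computable_fn k (\<lambda>p xs. of_bool (G1 p xs < G2 p xs))"
  by (rule computable_fn_cong[where F="\<lambda>p xs. 1 - (Suc (G1 p xs) - G2 p xs)"])
    (auto intro!: computable_fn_diff computable_fn_Suc computable_fn_const)

lemma computable_fn_conj:
  "computable_fn k (\<lambda>p xs. of_bool (P p xs)) \<Longrightarrow> computable_fn k (\<lambda>p xs. of_bool (Q p xs)) \<Longrightarrow>
   computable_fn k (\<lambda>p xs. of_bool (P p xs \<and> Q p xs))"
  by (rule computable_fn_cong[where F="\<lambda>p xs. of_bool (P p xs) * of_bool (Q p xs)"])
    (auto intro!: computable_fn_mult)

lemma computable_fn_not:
  "computable_fn k (\<lambda>p xs. of_bool (P p xs)) \<Longrightarrow> computable_fn k (\<lambda>p xs. of_bool (\<not> P p xs))"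
  by (rule computable_fn_cong[where F="\<lambda>p xs. 1 - of_bool (P p xs)"])
    (auto intro!: computable_fn_diff computable_fn_const)

lemma computable_fn_if:
  "computable_fn k (\<lambda>p xs. of_bool (P p xs)) \<Longrightarrow> computable_fn k G1 \<Longrightarrow> computable_fn k G2 \<Longrightarrow>
   computable_fn k (\<lambda>p xs. if P p xs then G1 p xs else G2 p xs)"
  by (rule computable_fn_cong
        [where F="\<lambda>p xs. of_bool (P p xs) * G1 p xs + (1 - of_bool (P p xs)) * G2 p xs"])
    (auto intro!: computable_fn_add computable_fn_mult computable_fn_diff computable_fn_const)

lemma computable_fn_binary_mod: "computable_fn 2 (\<lambda>p xs. xs ! 0 mod xs ! 1)"
proof -
  have "computable_fn 3 (\<lambda>p xs. if Suc (xs ! 1) = xs ! 2 then 0 else Suc (xs ! 1))"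
    by (intro computable_fn_if computable_fn_eq computable_fn_Suc computable_fn_proj
        computable_fn_const) auto
  then show ?thesis
    using computable_fn_primrec[of 1 "\<lambda>p xs. 0"
        "\<lambda>p xs. if Suc (xs ! 1) = xs ! 2 then 0 else Suc (xs ! 1)" "\<lambda>p xs. xs ! 0 mod xs ! 1"]
    by (simp add: computable_fn_zero numeral_2_eq_2 numeral_3_eq_3 mod_Suc)
qed

lemma computable_fn_mod:
  "computable_fn k G1 \<Longrightarrow> computable_fn k G2 \<Longrightarrow> computable_fn k (\<lambda>p xs. G1 p xs mod G2 p xs)"
  using computable_fn_comp2[OF computable_fn_binary_mod] by simp

lemma computable_fn_nth_tl: "Suc i < k \<Longrightarrow> computable_fn k (\<lambda>p xs. tl xs ! i)"
  by (rule computable_fn_cong[OF computable_fn_proj[of "Suc i" k]]) (auto simp: nth_tl)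

lemma computable_fn_nth_tl_tl: "Suc (Suc i) < k \<Longrightarrow> computable_fn k (\<lambda>p xs. tl (tl xs) ! i)"
  by (rule computable_fn_cong[OF computable_fn_proj[of "Suc (Suc i)" k]]) (auto simp: nth_tl)

lemma computable_fn_reindex:
  assumes F: "computable_fn m F" and \<sigma>: "\<forall>i<m. \<sigma> i < k"
  shows "computable_fn k (\<lambda>p xs. F p (map (\<lambda>i. xs ! \<sigma> i) [0..<m]))"
proof -
  have "\<forall>G\<in>set (map (\<lambda>i p xs. xs ! \<sigma> i) [0..<m]). computable_fn k G"
    using \<sigma> by (auto intro: computable_fn_proj)
  from computable_fn_comp[OF _ this] F show ?thesis by (simp add: comp_def)
qed

lemma computable_fn_sum:
  assumes F: "computable_fn (Suc k) (\<lambda>p zs. F p (zs ! 0) (tl zs))" and N: "computable_fn k N"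
  shows "computable_fn k (\<lambda>p xs. \<Sum>j<N p xs. F p j xs)"
proof -
  define \<sigma> where "\<sigma> i = (if i = 0 then 0 else Suc i)" for i :: nat
  have "computable_fn (Suc (Suc k)) (\<lambda>p zs. F p (zs ! 0) (drop 2 zs))"
  proof (rule computable_fn_cong[OF computable_fn_reindex[OF F, of \<sigma>]])
    fix p and zs :: "nat list" assume "length zs = Suc (Suc k)"
    then have "map (\<lambda>i. zs ! \<sigma> i) [0..<Suc k] = zs ! 0 # drop 2 zs"
      by (intro nth_equalityI) (auto simp: \<sigma>_def nth_Cons' simp del: upt_Suc)
    then show "F p (map (\<lambda>i. zs ! \<sigma> i) [0..<Suc k] ! 0) (tl (map (\<lambda>i. zs ! \<sigma> i) [0..<Suc k]))
        = F p (zs ! 0) (drop 2 zs)" by simp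
  qed (auto simp: \<sigma>_def)
  then have step: "computable_fn (Suc (Suc k)) (\<lambda>p zs. zs ! 1 + F p (zs ! 0) (drop 2 zs))"
    by (intro computable_fn_add computable_fn_proj) auto
  have partial_sums: "computable_fn (Suc k) (\<lambda>p zs. \<Sum>j<zs ! 0. F p j (tl zs))"
    by (rule computable_fn_primrec[OF computable_fn_zero step]) auto
  let ?args = "N # map (\<lambda>i p xs. xs ! i) [0..<k]"
  have "computable_fn k (\<lambda>p xs. (\<lambda>p zs. \<Sum>j<zs ! 0. F p j (tl zs)) p (map (\<lambda>G. G p xs) ?args))"
    by (rule computable_fn_comp) (use partial_sums N in \<open>auto intro: computable_fn_proj\<close>)
  then show ?thesis
  proof (rule computable_fn_cong)
    fix p and xs :: "nat list" assume "length xs = k"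
    then have "map (\<lambda>i. xs ! i) [0..<k] = xs" by (intro nth_equalityI) auto
    then show "(\<lambda>p zs. \<Sum>j<zs ! 0. F p j (tl zs)) p (map (\<lambda>G. G p xs) ?args) = (\<Sum>j<N p xs. F p j xs)"
      by (simp add: comp_def)
  qed
qed

lemma computable_fn_bounded_ex:
  assumes "computable_fn (Suc k) (\<lambda>p zs. of_bool (P p (zs ! 0) (tl zs)))" and "computable_fn k N"
  shows "computable_fn k (\<lambda>p xs. of_bool (\<exists>j<N p xs. P p j xs))"
  using computable_fn_less[OF computable_fn_const computable_fn_sum[OF assms], of 0]
  by (rule computable_fn_cong) auto

lemma computable_fn_Least:
  assumes F: "computable_fn (Suc k) (\<lambda>p zs. of_bool (P p (zs ! 0) (tl zs)))"
    and ex: "\<And>p xs. length xs = k \<Longrightarrow> \<exists>n. P p n xs"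
  shows "computable_fn k (\<lambda>p xs. LEAST n. P p n xs)"
  using computable_fn_minimize[OF computable_fn_not[OF F]] ex by simp

lemma computable_fn_div2:
  assumes "computable_fn k G" shows "computable_fn k (\<lambda>p xs. G p xs div 2)"
proof -
  have "computable_fn 1 (\<lambda>p xs. LEAST q. xs ! 0 < 2 * q + 2)"
  proof (rule computable_fn_Least)
    show "computable_fn (Suc 1) (\<lambda>p zs. of_bool (tl zs ! 0 < 2 * zs ! 0 + 2))"
      by (intro computable_fn_less computable_fn_add computable_fn_mult computable_fn_nth_tl
          computable_fn_const computable_fn_proj) auto
  qed presburger
  moreover have "(LEAST q. n < 2 * q + 2) = n div 2" for n :: nat
    by (auto intro: Least_equality)
  ultimately have "computable_fn 1 (\<lambda>p xs. xs ! 0 div 2)" by simp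
  from computable_fn_comp1[OF this assms] show ?thesis by simp
qed

lemma sW_le_by_name_translation:
  assumes "computable (\<lambda>p. Some (k p))" and "computable (\<lambda>q. Some (h q))"
    and "\<And>p x. dX p = Some x \<Longrightarrow> x \<in> Df \<Longrightarrow> \<exists>u. dU (k p) = Some u \<and> u \<in> Dg \<and>
           (\<forall>q v. dV q = Some v \<longrightarrow> v \<in> g u \<longrightarrow> (\<exists>y. dY (h q) = Some y \<and> y \<in> f x))"
  shows "sW_le dX dY Df f dU dV Dg g"
  unfolding sW_le_def
proof (intro exI conjI allI impI)
  fix G assume G: "realizes dU dV Dg g G"
  show "realizes dX dY Df f (\<lambda>p. Option.bind (Some (k p)) (\<lambda>q. Option.bind (G q) (\<lambda>q. Some (h q))))"
    unfolding realizes_def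
  proof (intro allI impI)
    fix p x assume "dX p = Some x \<and> x \<in> Df"
    with assms(3) obtain u where u: "dU (k p) = Some u" "u \<in> Dg"
      and out: "\<forall>q v. dV q = Some v \<longrightarrow> v \<in> g u \<longrightarrow> (\<exists>y. dY (h q) = Some y \<and> y \<in> f x)"
      by blast
    from G u obtain q v where "G (k p) = Some q" "dV q = Some v" "v \<in> g u"
      unfolding realizes_def by blast
    with out show "\<exists>q y. Option.bind (Some (k p)) (\<lambda>q. Option.bind (G q) (\<lambda>q. Some (h q))) = Some q
        \<and> dY q = Some y \<and> y \<in> f x" by auto
  qed
qed (use assms in auto)

section \<open>Arithmetic coding of binary words\<close>

fun encode_word :: "bool list \<Rightarrow> nat" where
  "encode_word [] = 0"
| "encode_word (b # bs) = 2 * encode_word bs + (if b then 1 else 2)"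

lemma decode_encode_word [simp]: "decode_word (encode_word w) = w"
proof (induction w)
  case (Cons b bs)
  have "encode_word (b # bs) = Suc (2 * encode_word bs + (if b then 0 else 1))" by simp
  then show ?case using Cons by (simp del: encode_word.simps)
qed simp

lemma encode_decode_word [simp]: "encode_word (decode_word c) = c"
proof (induction c rule: decode_word.induct)
  case (2 n)
  then show ?case by (cases "even n") (auto elim!: evenE oddE)
qed simp

lemma encode_word_append:
  "encode_word (v @ r) = encode_word v + 2 ^ length v * encode_word r"
  by (induction v) (auto simp: algebra_simps)

lemma encode_word_bounds:
  "2 ^ length w \<le> encode_word w + 1 \<and> encode_word w + 1 < 2 ^ Suc (length w)"
  by (induction w) auto

lemma encode_replicate_False: "encode_word (replicate m False) = 2 ^ (m + 1) - 2"
proof -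
  have "encode_word (replicate m False) + 2 = 2 ^ (m + 1)" by (induction m) auto
  then show ?thesis by linarith
qed

lemma length_decode_word_eq:
  assumes "2 ^ L \<le> c + 1" "c + 1 < 2 ^ Suc L"
  shows "length (decode_word c) = L"
proof -
  have "2 ^ length (decode_word c) \<le> c + 1" "c + 1 < 2 ^ Suc (length (decode_word c))"
    using encode_word_bounds[of "decode_word c"] by simp_all
  with assms have "length (decode_word c) < Suc L" "L < Suc (length (decode_word c))"
    by (meson le_less_trans nat_power_less_imp_less zero_less_numeral)+
  then show ?thesis by linarith
qed

definition code_length :: "nat \<Rightarrow> nat" where
  "code_length c = (LEAST L. c + 2 \<le> 2 ^ Suc L)"

lemma code_length_eq: "code_length c = length (decode_word c)"
  unfolding code_length_def
proof (rule Least_equality)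
  let ?L = "length (decode_word c)"
  have b: "2 ^ ?L \<le> c + 1" "c + 1 < 2 ^ Suc ?L"
    using encode_word_bounds[of "decode_word c"] by simp_all
  then show "c + 2 \<le> 2 ^ Suc ?L" by simp
  fix m assume "c + 2 \<le> 2 ^ Suc m"
  with b have "(2::nat) ^ ?L < 2 ^ Suc m" by linarith
  then show "?L \<le> m" by (metis less_Suc_eq_le nat_power_less_imp_less zero_less_numeral)
qed

definition code_prefix :: "nat \<Rightarrow> nat \<Rightarrow> bool" where
  "code_prefix a u \<longleftrightarrow> a \<le> u \<and> (u - a) mod 2 ^ code_length a = 0"

lemma code_prefix_iff: "code_prefix a u \<longleftrightarrow> prefix (decode_word a) (decode_word u)"
proof
  let ?v = "decode_word a"
  assume "code_prefix a u"
  then have le: "a \<le> u" and dvd: "2 ^ length ?v dvd u - a"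
    unfolding code_prefix_def code_length_eq by auto
  then obtain m where "u - a = 2 ^ length ?v * m" by blast
  with le have "encode_word (?v @ decode_word m) = u" by (simp add: encode_word_append)
  then have "decode_word u = ?v @ decode_word m" by (metis decode_encode_word)
  then show "prefix ?v (decode_word u)" by (rule prefixI)
next
  let ?v = "decode_word a"
  assume "prefix ?v (decode_word u)"
  then obtain r where "decode_word u = ?v @ r" by (rule prefixE)
  then have "u = a + 2 ^ length ?v * encode_word r" by (metis encode_decode_word encode_word_append)
  then show "code_prefix a u" unfolding code_prefix_def code_length_eq by simp
qed

text \<open>The codes of the words of length s are the numbers 2^s - 1 + j with j < 2^s; a number's
  position j inside its block runs through every natural number infinitely often.\<close>

definition level_index :: "nat \<Rightarrow> nat" where
  "level_index n = n + 1 - 2 ^ code_length n"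

lemma length_decode_level: "j < 2 ^ s \<Longrightarrow> length (decode_word (2 ^ s - 1 + j)) = s"
  using one_le_power[of "2::nat" s] by (intro length_decode_word_eq) auto

lemma level_index_frequently: "\<exists>n\<ge>N. level_index n = c"
proof -
  let ?s = "N + c + 1"
  have "c < 2 ^ ?s" "N < 2 ^ ?s" using less_exp[of ?s] by linarith+
  then have "level_index (2 ^ ?s - 1 + c) = c" "N \<le> 2 ^ ?s - 1 + c"
    using length_decode_level[of c ?s] one_le_power[of "2::nat" ?s]
    by (auto simp: level_index_def code_length_eq)
  then show ?thesis by blast
qed

lemma bij_betw_level: "bij_betw (\<lambda>j. decode_word (2 ^ s - 1 + j)) {..<2 ^ s} {u. length u = s}"
proof (rule bij_betwI[where g="\<lambda>u. encode_word u + 1 - 2 ^ s"])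
  have pos: "(1::nat) \<le> 2 ^ s" by simp
  show "(\<lambda>j. decode_word (2 ^ s - 1 + j)) \<in> {..<2 ^ s} \<rightarrow> {u. length u = s}"
    using length_decode_level by auto
  show "(\<lambda>u. encode_word u + 1 - 2 ^ s) \<in> {u. length u = s} \<rightarrow> {..<2 ^ s}"
  proof
    fix u :: "bool list" assume "u \<in> {u. length u = s}"
    then have "encode_word u + 1 < 2 * 2 ^ s" using encode_word_bounds[of u] by auto
    then show "encode_word u + 1 - 2 ^ s \<in> {..<2 ^ s}" by auto
  qed
  show "encode_word (decode_word (2 ^ s - 1 + j)) + 1 - 2 ^ s = j" for j
    using pos by simp
  show "decode_word (2 ^ s - 1 + (encode_word u + 1 - 2 ^ s)) = u" if "u \<in> {u. length u = s}" for u
    using that encode_word_bounds[of u] by simp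
qed

lemma computable_fn_code_length:
  assumes "computable_fn k G" shows "computable_fn k (\<lambda>p xs. code_length (G p xs))"
proof -
  have "computable_fn 1 (\<lambda>p xs. LEAST L. xs ! 0 + 2 \<le> 2 ^ Suc L)"
  proof (rule computable_fn_Least)
    show "computable_fn (Suc 1) (\<lambda>p zs. of_bool (tl zs ! 0 + 2 \<le> 2 ^ Suc (zs ! 0)))"
      by (intro computable_fn_le computable_fn_add computable_fn_nth_tl computable_fn_const
          computable_fn_pow2 computable_fn_Suc computable_fn_proj) auto
    show "\<exists>L. xs ! 0 + 2 \<le> 2 ^ Suc L" for xs :: "nat list"
      using less_exp[of "Suc (xs ! 0)"] by (intro exI[of _ "xs ! 0"]) simp
  qed
  then have "computable_fn 1 (\<lambda>p xs. code_length (xs ! 0))" by (simp add: code_length_def)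
  from computable_fn_comp1[OF this assms] show ?thesis by simp
qed

lemma computable_fn_code_prefix:
  "computable_fn k G1 \<Longrightarrow> computable_fn k G2 \<Longrightarrow>
   computable_fn k (\<lambda>p xs. of_bool (code_prefix (G1 p xs) (G2 p xs)))"
  unfolding code_prefix_def
  by (intro computable_fn_conj computable_fn_le computable_fn_eq computable_fn_mod computable_fn_diff
      computable_fn_pow2 computable_fn_code_length computable_fn_const)

lemma computable_fn_level_index:
  "computable_fn k G \<Longrightarrow> computable_fn k (\<lambda>p xs. level_index (G p xs))"
  unfolding level_index_def
  by (intro computable_fn_add computable_fn_diff computable_fn_pow2 computable_fn_code_length
      computable_fn_const)

section \<open>Cylinders and the uniform measure on Cantor space\<close>

interpretation cantor: prob_space cantor
  unfolding cantor_def by (rule prob_space_PiM) (rule prob_space_measure_pmf)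

lemma space_cantor [simp]: "space cantor = UNIV"
  by (auto simp: cantor_def space_PiM PiE_def extensional_def)

lemma sets_cantor_coordinate: "{x. x i = b} \<in> sets cantor"
proof -
  have "(\<lambda>x. x i) \<in> measurable cantor (measure_pmf (bernoulli_pmf (1/2)))"
    unfolding cantor_def by (rule measurable_component_singleton) simp
  then have "(\<lambda>x. x i) -` {b} \<inter> space cantor \<in> sets cantor" by (rule measurable_sets) simp
  then show ?thesis by (simp add: vimage_def)
qed

lemma sets_cyl [simp]: "cyl w \<in> sets cantor"
proof -
  have "cyl w = {x \<in> space cantor. \<forall>i\<in>{..<length w}. x i = w ! i}" by (auto simp: cyl_def)
  also have "\<dots> \<in> sets cantor"
    using sets_cantor_coordinate by (intro sets.sets_Collect_finite_All) simp_all
  finally show ?thesis .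
qed

lemma sets_UN_cyl: "(\<Union>i\<in>(I::nat set). cyl (f i)) \<in> sets cantor"
  by (rule sets.countable_UN) auto

lemma sets_Compl_cantor: "S \<in> sets cantor \<Longrightarrow> - S \<in> sets cantor"
  using sets.compl_sets[of S cantor] by (simp add: Compl_eq_Diff_UNIV)

lemma emeasure_cyl: "emeasure cantor (cyl w) = ennreal ((1/2) ^ length w)"
proof -
  let ?M = "\<lambda>_::nat. measure_pmf (bernoulli_pmf (1/2))"
  have "x \<in> cyl w \<longleftrightarrow> x \<in> prod_emb UNIV ?M {..<length w} (PiE {..<length w} (\<lambda>i. {w ! i}))"
    for x :: "nat \<Rightarrow> bool"
    unfolding prod_emb_def cyl_def by (simp add: space_PiM restrict_PiE_iff Pi_iff Ball_def)
  then have "cyl w = prod_emb UNIV ?M {..<length w} (PiE {..<length w} (\<lambda>i. {w ! i}))"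
    by blast
  then have "emeasure cantor (cyl w) = (\<Prod>i<length w. emeasure (?M i) {w ! i})"
    unfolding cantor_def by (simp add: emeasure_PiM_emb prob_space_measure_pmf)
  also have "\<dots> = (\<Prod>i<length w. ennreal (1/2))"
    by (intro prod.cong refl) (simp add: emeasure_pmf_single pmf_bernoulli_True)
  also have "\<dots> = ennreal ((1/2) ^ length w)" by (simp only: prod_constant card_lessThan ennreal_power)
  finally show ?thesis .
qed

lemma mu_cyl: "mu (cyl w) = (1/2) ^ length w"
  using emeasure_cyl[of w] unfolding mu_def cantor.emeasure_eq_measure by simp

lemma mu_mono: "B \<in> sets cantor \<Longrightarrow> A \<subseteq> B \<Longrightarrow> mu A \<le> mu B"
  unfolding mu_def by (rule cantor.finite_measure_mono)

lemma cyl_append_subset: "cyl (v @ r) \<subseteq> cyl v"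
  by (auto simp: cyl_def nth_append)

lemma cyl_snoc: "x \<in> cyl (v @ [b]) \<longleftrightarrow> x \<in> cyl v \<and> x (length v) = b"
  unfolding cyl_def by (simp add: All_less_Suc nth_append conj_commute)

definition initial_word :: "nat \<Rightarrow> (nat \<Rightarrow> bool) \<Rightarrow> bool list" where
  "initial_word s x = map x [0..<s]"

lemma length_initial_word [simp]: "length (initial_word s x) = s"
  by (simp add: initial_word_def)

lemma mem_cyl_iff_prefix: "length w \<le> s \<Longrightarrow> x \<in> cyl w \<longleftrightarrow> prefix w (initial_word s x)"
proof -
  assume "length w \<le> s"
  then have "take (length w) (initial_word s x) = map x [0..<length w]"
    by (simp add: initial_word_def take_map)
  moreover have "prefix w (initial_word s x) \<longleftrightarrow> take (length w) (initial_word s x) = w"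
    using take_is_prefix[of "length w" "initial_word s x"] by (auto elim: prefixE)
  ultimately have "prefix w (initial_word s x) \<longleftrightarrow> map x [0..<length w] = w"
    by simp
  moreover have "map x [0..<length w] = w \<longleftrightarrow> (\<forall>i<length w. x i = w ! i)"
  proof
    assume "map x [0..<length w] = w"
    then show "\<forall>i<length w. x i = w ! i" using nth_map_upt[of _ "length w" 0 x] by auto
  qed (auto intro: nth_equalityI)
  ultimately show ?thesis by (simp add: cyl_def)
qed

lemma mem_cyl_iff_initial_word: "length u = s \<Longrightarrow> x \<in> cyl u \<longleftrightarrow> initial_word s x = u"
  using mem_cyl_iff_prefix[of u s x] prefix_length_prefix[of "initial_word s x" "initial_word s x" u]
  by (auto intro: prefix_order.antisym)

lemma mu_initial_word_sum:
  assumes S: "S \<in> sets cantor" and T: "T \<subseteq> {u. length u = s}"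
  shows "mu (S \<inter> {x. initial_word s x \<in> T}) = (\<Sum>u\<in>T. mu (S \<inter> cyl u))"
proof -
  have fin: "finite T" using finite_subset[OF T] finite_lists_length_eq[of "UNIV :: bool set" s] by simp
  have cyl_T: "cyl u = {x. initial_word s x = u}" if "u \<in> T" for u
    using that T by (auto simp: mem_cyl_iff_initial_word)
  have "mu (\<Union>u\<in>T. S \<inter> cyl u) = (\<Sum>u\<in>T. mu (S \<inter> cyl u))"
    unfolding mu_def
  proof (rule cantor.finite_measure_finite_Union[OF fin])
    show "(\<lambda>u. S \<inter> cyl u) ` T \<subseteq> sets cantor" using S by auto
    show "disjoint_family_on (\<lambda>u. S \<inter> cyl u) T"
      by (auto simp: disjoint_family_on_def cyl_T)
  qed
  moreover have "S \<inter> {x. initial_word s x \<in> T} = (\<Union>u\<in>T. S \<inter> cyl u)"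
    by (auto simp: cyl_T)
  ultimately show ?thesis by simp
qed

lemma mu_initial_word_card:
  assumes T: "T \<subseteq> {u. length u = s}"
  shows "mu {x. initial_word s x \<in> T} = card T * (1/2) ^ s"
proof -
  have "mu (UNIV \<inter> {x. initial_word s x \<in> T}) = (\<Sum>u\<in>T. mu (UNIV \<inter> cyl u))"
    by (rule mu_initial_word_sum[OF _ T]) (metis sets.top space_cantor)
  also have "\<dots> = (\<Sum>u\<in>T. (1/2) ^ s)"
    using T by (intro sum.cong) (auto simp: mu_cyl)
  finally show ?thesis by simp
qed

section \<open>Choice on the naturals reduces to the density problem\<close>

definition first_true_in :: "nat set \<Rightarrow> (nat \<Rightarrow> bool) set" where
  "first_true_in A = - (\<Union>m\<in>-A. cyl (replicate m False @ [True]))"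

lemma sets_first_true_in: "first_true_in A \<in> sets cantor"
  unfolding first_true_in_def by (intro sets_Compl_cantor sets_UN_cyl)

lemma mem_cyl_replicate_True: "x \<in> cyl (replicate n False @ [True]) \<longleftrightarrow> (\<forall>i<n. \<not> x i) \<and> x n"
  unfolding cyl_snoc by (simp add: cyl_def)

lemma cyl_replicate_True_inj:
  "x \<in> cyl (replicate n False @ [True]) \<Longrightarrow> x \<in> cyl (replicate m False @ [True]) \<Longrightarrow> n = m"
  unfolding mem_cyl_replicate_True by (meson linorder_neqE_nat)

lemma mu_first_true_in_pos:
  assumes "n \<in> A" shows "0 < mu (first_true_in A)"
proof -
  have "cyl (replicate n False @ [True]) \<subseteq> first_true_in A"
    unfolding first_true_in_def using assms cyl_replicate_True_inj by blast
  then have "mu (cyl (replicate n False @ [True])) \<le> mu (first_true_in A)"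
    by (intro mu_mono sets_first_true_in)
  moreover have "0 < mu (cyl (replicate n False @ [True]))" by (simp add: mu_cyl)
  ultimately show ?thesis by linarith
qed

definition leading_falses :: "bool list \<Rightarrow> nat" where
  "leading_falses w = (LEAST j. \<not> prefix (replicate (Suc j) False) w)"

lemma ex_not_prefix_replicate: "\<exists>j. \<not> prefix (replicate (Suc j) False) w"
  by (metis Suc_n_not_le_n length_replicate prefix_length_le)

lemma leading_falses_split:
  obtains r where "w = replicate (leading_falses w) False @ r" "r = [] \<or> hd r"
proof -
  let ?j = "leading_falses w"
  have not_longer: "\<not> prefix (replicate (Suc ?j) False) w"
    unfolding leading_falses_def by (rule LeastI_ex[OF ex_not_prefix_replicate])
  have "prefix (replicate ?j False) w"
  proof (cases ?j)
    case (Suc i)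
    then have "prefix (replicate (Suc i) False) w"
      using not_less_Least[of i "\<lambda>j. \<not> prefix (replicate (Suc j) False) w"]
      unfolding leading_falses_def by simp
    then show ?thesis using Suc by simp
  qed simp
  then obtain r where r: "w = replicate ?j False @ r" by (rule prefixE)
  moreover have "r = [] \<or> hd r"
  proof (cases r)
    case (Cons b r')
    with r not_longer have "b" by (cases b) (auto simp: replicate_append_same[symmetric] prefix_def)
    with Cons show ?thesis by simp
  qed simp
  ultimately show thesis by (rule that)
qed

lemma mu_first_true_in_cyl_le:
  assumes "j \<notin> A" and w: "w = replicate j False @ r" and r: "r = [] \<or> hd r"
  shows "mu (first_true_in A \<inter> cyl w) \<le> (1/2) * (1/2) ^ length w"
proof -
  have avoid: "cyl (replicate j False @ [True]) \<inter> first_true_in A = {}"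
    unfolding first_true_in_def using assms(1) by blast
  show ?thesis
  proof (cases r)
    case Nil
    have "first_true_in A \<inter> cyl w \<subseteq> cyl (replicate j False @ [False])"
      using avoid w Nil by (auto simp: cyl_snoc)
    then have "mu (first_true_in A \<inter> cyl w) \<le> mu (cyl (replicate j False @ [False]))"
      by (intro mu_mono) simp_all
    then show ?thesis using w Nil by (simp add: mu_cyl)
  next
    case (Cons b r')
    with w r have "w = (replicate j False @ [True]) @ r'" by simp
    then have "first_true_in A \<inter> cyl w = {}"
      using avoid cyl_append_subset by blast
    then show ?thesis by (simp add: mu_def)
  qed
qed

lemma leading_falses_mem:
  assumes "w \<in> LDL (first_true_in A, 2)"
  shows "leading_falses w \<in> A"
proof (rule ccontr)
  obtain r where "w = replicate (leading_falses w) False @ r" "r = [] \<or> hd r"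
    by (rule leading_falses_split)
  moreover assume "leading_falses w \<notin> A"
  ultimately have upper: "mu (first_true_in A \<inter> cyl w) \<le> (1/2) * (1/2) ^ length w"
    by (intro mu_first_true_in_cyl_le)
  have "(3/4) * (1/2) ^ length w \<le> mu (first_true_in A \<inter> cyl w)"
    using assms by (simp add: LDL_def pos_le_divide_eq power2_eq_square)
  moreover have "0 < (1/2::real) ^ length w" by simp
  ultimately show False using upper by linarith
qed

text \<open>A name of the instance (first_true_in A, 2), read off a name p of A: position 2i enumerates
  the cylinder of replicate m False @ [True] when p i = Suc m (the word has code 3 * 2^m - 2),
  position 1 carries k = 2, and the remaining odd positions are ignored.\<close>

definition CN_to_LDL_input :: "baire \<Rightarrow> nat list \<Rightarrow> nat" where
  "CN_to_LDL_input p xs =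
     (if xs ! 0 = 1 then 2
      else if p (xs ! 0 div 2) = 0 then 0 else 3 * 2 ^ (p (xs ! 0 div 2) - 1) - 1)"

definition LDL_to_CN_output :: "baire \<Rightarrow> nat list \<Rightarrow> nat" where
  "LDL_to_CN_output q xs = (LEAST j. \<not> code_prefix (2 ^ (j + 2) - 2) (q 0))"

lemma computable_fn_CN_to_LDL_input: "computable_fn 1 CN_to_LDL_input"
  unfolding CN_to_LDL_input_def
  by (intro computable_fn_if computable_fn_eq computable_fn_proj computable_fn_const computable_fn_diff
      computable_fn_mult computable_fn_pow2 computable_fn_oracle computable_fn_div2) auto

lemma code_prefix_replicate_False:
  "code_prefix (2 ^ (j + 2) - 2) c \<longleftrightarrow> prefix (replicate (Suc j) False) (decode_word c)"
proof -
  have "2 ^ (j + 2) - 2 = encode_word (replicate (Suc j) False)"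
    using encode_replicate_False[of "Suc j"] by (simp del: replicate.simps)
  then show ?thesis by (simp add: code_prefix_iff)
qed

lemma LDL_to_CN_output_eq: "LDL_to_CN_output q xs = leading_falses (decode_word (q 0))"
  unfolding LDL_to_CN_output_def leading_falses_def code_prefix_replicate_False ..

lemma computable_fn_LDL_to_CN_output: "computable_fn 1 LDL_to_CN_output"
  unfolding LDL_to_CN_output_def
proof (rule computable_fn_Least)
  show "computable_fn (Suc 1) (\<lambda>q zs. of_bool (\<not> code_prefix (2 ^ (zs ! 0 + 2) - 2) (q 0)))"
    by (intro computable_fn_not computable_fn_code_prefix computable_fn_diff computable_fn_pow2
        computable_fn_add computable_fn_proj computable_fn_const computable_fn_oracle) auto
  show "\<exists>j. \<not> code_prefix (2 ^ (j + 2) - 2) (q 0)" for q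
    unfolding code_prefix_replicate_False by (rule ex_not_prefix_replicate)
qed

lemma CN_to_LDL_input_even:
  "CN_to_LDL_input p [2 * i] =
     (if p i = 0 then 0 else Suc (encode_word (replicate (p i - 1) False @ [True])))"
proof (cases "p i")
  case (Suc m)
  have "encode_word (replicate m False @ [True]) = 3 * 2 ^ m - 2"
    using one_le_power[of "2::nat" m] by (simp add: encode_word_append encode_replicate_False)
  moreover have "(1::nat) \<le> 2 ^ m" by simp
  ultimately have "3 * 2 ^ m - 1 = Suc (encode_word (replicate m False @ [True]))" by linarith
  then show ?thesis using Suc by (simp add: CN_to_LDL_input_def)
qed (simp add: CN_to_LDL_input_def)

lemma delta_CN_to_LDL_input:
  "delta_pair delta_AC delta_nat (\<lambda>n. CN_to_LDL_input p [n])
     = Some (first_true_in {n. \<forall>i. p i \<noteq> Suc n}, 2)"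
proof -
  have "(\<Union>i\<in>{i. CN_to_LDL_input p [2 * i] \<noteq> 0}. cyl (decode_word (CN_to_LDL_input p [2 * i] - 1)))
      = (\<Union>i\<in>{i. p i \<noteq> 0}. cyl (replicate (p i - 1) False @ [True]))"
    by (simp add: CN_to_LDL_input_even)
  also have "\<dots> = (\<Union>m\<in>- {n. \<forall>i. p i \<noteq> Suc n}. cyl (replicate m False @ [True]))"
    by (auto simp: gr0_conv_Suc)
  finally show ?thesis
    by (simp add: delta_pair_def delta_AC_def delta_nat_def first_true_in_def CN_to_LDL_input_def)
qed

lemma CN_sW_le_LDL:
  "sW_le delta_AN delta_nat CN_dom CN (delta_pair delta_AC delta_nat) delta_word LDL_dom LDL"
proof (rule sW_le_by_name_translation)
  show "computable (\<lambda>p. Some (\<lambda>n. CN_to_LDL_input p [n]))"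
    by (rule computable_of_computable_fn[OF computable_fn_CN_to_LDL_input])
  show "computable (\<lambda>q. Some (\<lambda>n. LDL_to_CN_output q [n]))"
    by (rule computable_of_computable_fn[OF computable_fn_LDL_to_CN_output])
  fix p A assume "delta_AN p = Some A" "A \<in> CN_dom"
  then have A: "A = {n. \<forall>i. p i \<noteq> Suc n}" "A \<noteq> {}" by (auto simp: delta_AN_def CN_dom_def)
  show "\<exists>u. delta_pair delta_AC delta_nat (\<lambda>n. CN_to_LDL_input p [n]) = Some u \<and> u \<in> LDL_dom \<and>
      (\<forall>q w. delta_word q = Some w \<longrightarrow> w \<in> LDL u \<longrightarrow>
         (\<exists>n. delta_nat (\<lambda>n. LDL_to_CN_output q [n]) = Some n \<and> n \<in> CN A))"
  proof (intro exI conjI allI impI)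
    show "delta_pair delta_AC delta_nat (\<lambda>n. CN_to_LDL_input p [n]) = Some (first_true_in A, 2)"
      using A by (simp add: delta_CN_to_LDL_input)
    show "(first_true_in A, 2) \<in> LDL_dom"
      using A mu_first_true_in_pos by (auto simp: LDL_dom_def)
    fix q w assume "delta_word q = Some w" "w \<in> LDL (first_true_in A, 2)"
    then show "delta_nat (\<lambda>n. LDL_to_CN_output q [n]) = Some (LDL_to_CN_output q [0])"
      "LDL_to_CN_output q [0] \<in> CN A"
      using leading_falses_mem by (auto simp: delta_nat_def delta_word_def LDL_to_CN_output_eq CN_def)
  qed
qed

section \<open>The density problem reduces to choice on the naturals\<close>

definition enum_word :: "baire \<Rightarrow> nat \<Rightarrow> bool list" where
  "enum_word P i = decode_word (P (2 * i) - 1)"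

definition named_set :: "baire \<Rightarrow> (nat \<Rightarrow> bool) set" where
  "named_set P = - (\<Union>i\<in>{i. P (2 * i) \<noteq> 0}. cyl (enum_word P i))"

text \<open>The length bound makes stage s a union of cylinders of length s, so that its measure
  inside a cylinder is a count of words.\<close>

definition stage_compl :: "baire \<Rightarrow> nat \<Rightarrow> (nat \<Rightarrow> bool) set" where
  "stage_compl P s =
     (\<Union>i\<in>{i. i < s \<and> P (2 * i) \<noteq> 0 \<and> length (enum_word P i) \<le> s}. cyl (enum_word P i))"

lemma delta_AC_nat_named_set: "delta_pair delta_AC delta_nat P = Some (named_set P, P 1)"
  by (simp add: delta_pair_def delta_AC_def delta_nat_def named_set_def enum_word_def)

lemma sets_named_set: "named_set P \<in> sets cantor"
  unfolding named_set_def by (intro sets_Compl_cantor sets_UN_cyl)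

lemma sets_stage_compl: "stage_compl P s \<in> sets cantor"
  unfolding stage_compl_def by (rule sets_UN_cyl)

lemma stage_compl_mono: "s \<le> s' \<Longrightarrow> stage_compl P s \<subseteq> stage_compl P s'"
  unfolding stage_compl_def by (intro UN_mono) auto

lemma stage_compl_subset: "stage_compl P s \<subseteq> - named_set P"
  unfolding stage_compl_def named_set_def by auto

lemma UN_stage_compl: "(\<Union>s. stage_compl P s) = - named_set P"
proof
  show "- named_set P \<subseteq> (\<Union>s. stage_compl P s)"
  proof
    fix x assume "x \<in> - named_set P"
    then obtain i where "P (2 * i) \<noteq> 0" "x \<in> cyl (enum_word P i)" unfolding named_set_def by blast
    then have "x \<in> stage_compl P (Suc i + length (enum_word P i))"
      unfolding stage_compl_def by (intro UN_I[of i]) auto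
    then show "x \<in> (\<Union>s. stage_compl P s)" by blast
  qed
qed (use stage_compl_subset in blast)

lemma tendsto_mu_stage_compl_cyl:
  "(\<lambda>s. mu (stage_compl P s \<inter> cyl w)) \<longlonglongrightarrow> mu (- named_set P \<inter> cyl w)"
proof -
  have "(\<lambda>s. measure cantor (stage_compl P s \<inter> cyl w)) \<longlonglongrightarrow> measure cantor (\<Union>s. stage_compl P s \<inter> cyl w)"
    using sets_stage_compl stage_compl_mono
    by (intro cantor.finite_Lim_measure_incseq) (auto simp: incseq_def, blast)
  moreover have "(\<Union>s. stage_compl P s \<inter> cyl w) = - named_set P \<inter> cyl w"
    using UN_stage_compl by blast
  ultimately show ?thesis unfolding mu_def by simp
qed

definition covered :: "baire \<Rightarrow> nat \<Rightarrow> bool list \<Rightarrow> bool" where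
  "covered P s u \<longleftrightarrow> (\<exists>i<s. P (2 * i) \<noteq> 0 \<and> prefix (enum_word P i) u)"

lemma stage_compl_iff_covered: "x \<in> stage_compl P s \<longleftrightarrow> covered P s (initial_word s x)"
  unfolding stage_compl_def covered_def
  using mem_cyl_iff_prefix prefix_length_le[where ys="initial_word s x"] by fastforce

definition stage_words :: "baire \<Rightarrow> nat \<Rightarrow> bool list \<Rightarrow> bool list set" where
  "stage_words P s w = {u. length u = s \<and> prefix w u \<and> covered P s u}"

lemma mu_stage_compl_cyl:
  assumes "length w \<le> s"
  shows "mu (stage_compl P s \<inter> cyl w) = card (stage_words P s w) * (1/2) ^ s"
proof -
  have "stage_compl P s \<inter> cyl w = {x. initial_word s x \<in> stage_words P s w}"
    using assms by (auto simp: stage_words_def stage_compl_iff_covered mem_cyl_iff_prefix)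
  moreover have "stage_words P s w \<subseteq> {u. length u = s}" by (auto simp: stage_words_def)
  ultimately show ?thesis by (simp add: mu_initial_word_card)
qed

definition stage_count :: "baire \<Rightarrow> nat \<Rightarrow> nat \<Rightarrow> nat" where
  "stage_count P s c = (\<Sum>j<2 ^ s. of_bool (code_prefix c (2 ^ s - 1 + j) \<and>
       (\<exists>i<s. P (2 * i) \<noteq> 0 \<and> code_prefix (P (2 * i) - 1) (2 ^ s - 1 + j))))"

lemma stage_count_eq_card: "stage_count P s c = card (stage_words P s (decode_word c))"
proof -
  let ?Q = "\<lambda>u. prefix (decode_word c) u \<and> covered P s u"
  have "stage_count P s c = (\<Sum>j<2 ^ s. of_bool (?Q (decode_word (2 ^ s - 1 + j))))"
    unfolding stage_count_def covered_def enum_word_def by (simp add: code_prefix_iff)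
  also have "\<dots> = (\<Sum>u\<in>{u. length u = s}. of_bool (?Q u))"
    by (rule sum.reindex_bij_betw[OF bij_betw_level])
  also have "\<dots> = card ({u. length u = s} \<inter> {u. ?Q u})"
    using finite_lists_length_eq[of "UNIV :: bool set" s] by simp
  also have "{u. length u = s} \<inter> {u. ?Q u} = stage_words P s (decode_word c)"
    by (auto simp: stage_words_def)
  finally show ?thesis .
qed

definition refuted :: "baire \<Rightarrow> nat \<Rightarrow> nat \<Rightarrow> bool" where
  "refuted P n c \<longleftrightarrow> 2 ^ n < stage_count P n c * 2 ^ (P 1 + code_length c)"

lemma refuted_length: "refuted P n c \<Longrightarrow> length (decode_word c) \<le> n"
proof (rule ccontr)
  assume "refuted P n c" and "\<not> length (decode_word c) \<le> n"
  then have "stage_words P n (decode_word c) = {}"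
    by (auto simp: stage_words_def dest: prefix_length_le)
  with \<open>refuted P n c\<close> show False by (simp add: refuted_def stage_count_eq_card)
qed

lemma refuted_iff_mu:
  assumes "length (decode_word c) \<le> n"
  shows "refuted P n c \<longleftrightarrow>
    (1/2) ^ (P 1 + length (decode_word c)) < mu (stage_compl P n \<inter> cyl (decode_word c))"
proof -
  let ?e = "P 1 + length (decode_word c)" and ?C = "real (stage_count P n c)"
  have "refuted P n c \<longleftrightarrow> (2::real) ^ n < ?C * 2 ^ ?e"
    unfolding refuted_def code_length_eq
    by (metis (mono_tags) of_nat_less_iff of_nat_mult of_nat_numeral of_nat_power)
  also have "\<dots> \<longleftrightarrow> (1/2) ^ ?e < ?C * (1/2) ^ n"
    by (simp add: power_one_over field_simps)
  finally show ?thesis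
    using mu_stage_compl_cyl[OF assms] by (simp add: stage_count_eq_card)
qed

lemma mem_LDL_iff:
  assumes "A \<in> sets cantor"
  shows "w \<in> LDL (A, k) \<longleftrightarrow> mu (- A \<inter> cyl w) \<le> (1/2) ^ (k + length w)"
proof -
  have "mu (cyl w - (- A \<inter> cyl w)) = mu (cyl w) - mu (- A \<inter> cyl w)"
    unfolding mu_def using assms by (intro cantor.finite_measure_Diff) (auto intro: sets_Compl_cantor)
  moreover have "cyl w - (- A \<inter> cyl w) = A \<inter> cyl w" by blast
  ultimately have "mu (A \<inter> cyl w) = (1/2) ^ length w - mu (- A \<inter> cyl w)"
    by (simp add: mu_cyl)
  moreover have "w \<in> LDL (A, k) \<longleftrightarrow> (1 - (1/2) ^ k) * (1/2) ^ length w \<le> mu (A \<inter> cyl w)"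
    unfolding LDL_def by (simp add: pos_le_divide_eq)
  ultimately show ?thesis by (simp add: algebra_simps power_add) linarith
qed

lemma survivor_Compl_small:
  assumes survives: "\<forall>n. level_index n = c \<longrightarrow> \<not> refuted P n c"
  shows "mu (- named_set P \<inter> cyl (decode_word c)) \<le> (1/2) ^ (P 1 + length (decode_word c))"
proof (rule LIMSEQ_le_const2[OF tendsto_mu_stage_compl_cyl], intro exI allI impI)
  let ?w = "decode_word c"
  fix s
  obtain n where n: "n \<ge> s + length ?w" "level_index n = c"
    using level_index_frequently by blast
  then have "mu (stage_compl P n \<inter> cyl ?w) \<le> (1/2) ^ (P 1 + length ?w)"
    using survives refuted_iff_mu[of c n P] by fastforce
  moreover have "mu (stage_compl P s \<inter> cyl ?w) \<le> mu (stage_compl P n \<inter> cyl ?w)"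
    using stage_compl_mono[of s n P] n(1) by (intro mu_mono) (auto intro: sets_stage_compl)
  ultimately show "mu (stage_compl P s \<inter> cyl ?w) \<le> (1/2) ^ (P 1 + length ?w)" by linarith
qed

lemma Compl_stage_compl:
  "- stage_compl P s = {x. initial_word s x \<in> {u. length u = s \<and> \<not> covered P s u}}"
  by (auto simp: stage_compl_iff_covered)

text \<open>At a stage s where the part of the
  complement of A not yet covered has measure below 2^-k mu(A), that part is spread over the
  uncovered cylinders of length s; these carry all of A, so there are at least mu(A) 2^s of
  them, and one of them meets the complement in at most a 2^-k fraction.\<close>

lemma ex_cyl_Compl_small:
  assumes pos: "0 < mu (named_set P)"
  shows "\<exists>w. mu (- named_set P \<inter> cyl w) \<le> (1/2) ^ (k + length w)"
proof (rule ccontr)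
  let ?A = "named_set P" and ?e = "(1/2::real) ^ k"
  assume "\<not> ?thesis"
  then have big: "?e * (1/2) ^ length w < mu (- ?A \<inter> cyl w)" for w
    by (simp add: not_le power_add)
  have "(\<lambda>s. mu (stage_compl P s)) \<longlonglongrightarrow> mu (- ?A)"
    using tendsto_mu_stage_compl_cyl[of P "[]"] by (simp add: cyl_def)
  moreover have "0 < ?e * mu ?A" using pos by simp
  ultimately obtain s where "norm (mu (stage_compl P s) - mu (- ?A)) < ?e * mu ?A"
    by (blast dest: LIMSEQ_D)
  then have gap: "mu (- ?A) - mu (stage_compl P s) < ?e * mu ?A" by simp
  define T where "T = {u. length u = s \<and> \<not> covered P s u}"
  have T: "T \<subseteq> {u. length u = s}" "finite T"
    using finite_lists_length_eq[of "UNIV :: bool set" s] by (auto simp: T_def)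
  have sets_A: "- ?A \<in> sets cantor" by (intro sets_Compl_cantor sets_named_set)
  have "mu (- ?A) - mu (stage_compl P s) = mu (- ?A - stage_compl P s)"
    unfolding mu_def using sets_A sets_stage_compl stage_compl_subset
    by (intro cantor.finite_measure_Diff[symmetric])
  also have "- ?A - stage_compl P s = - ?A \<inter> {x. initial_word s x \<in> T}"
    using Compl_stage_compl unfolding T_def by blast
  also have "mu \<dots> = (\<Sum>u\<in>T. mu (- ?A \<inter> cyl u))"
    by (rule mu_initial_word_sum[OF sets_A T(1)])
  finally have diff: "mu (- ?A) - mu (stage_compl P s) = (\<Sum>u\<in>T. mu (- ?A \<inter> cyl u))" .
  have "{x. initial_word s x \<in> T} = - stage_compl P s"
    unfolding T_def Compl_stage_compl ..
  then have "mu ?A \<le> mu {x. initial_word s x \<in> T}"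
    using stage_compl_subset by (intro mu_mono) (auto intro: sets_Compl_cantor sets_stage_compl)
  also have "\<dots> = card T * (1/2) ^ s" by (rule mu_initial_word_card[OF T(1)])
  finally have "?e * mu ?A \<le> (\<Sum>u\<in>T. ?e * (1/2) ^ s)" by simp
  also have "\<dots> \<le> (\<Sum>u\<in>T. mu (- ?A \<inter> cyl u))"
    using T big by (intro sum_mono) (auto simp: less_imp_le)
  finally show False using gap diff by linarith
qed

lemma ex_survivor:
  assumes "0 < mu (named_set P)"
  shows "\<exists>c. \<forall>n. level_index n = c \<longrightarrow> \<not> refuted P n c"
proof -
  obtain w where w: "mu (- named_set P \<inter> cyl w) \<le> (1/2) ^ (P 1 + length w)"
    using ex_cyl_Compl_small[OF assms] by blast
  have "\<forall>n. level_index n = encode_word w \<longrightarrow> \<not> refuted P n (encode_word w)"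
  proof (intro allI impI notI)
    fix n assume "refuted P n (encode_word w)"
    then have "(1/2) ^ (P 1 + length w) < mu (stage_compl P n \<inter> cyl w)"
      using refuted_length refuted_iff_mu by fastforce
    moreover have "mu (stage_compl P n \<inter> cyl w) \<le> mu (- named_set P \<inter> cyl w)"
      using stage_compl_subset
      by (intro mu_mono) (auto intro!: sets.Int sets_Compl_cantor sets_named_set)
    ultimately show False using w by linarith
  qed
  then show ?thesis by blast
qed

text \<open>The candidate with code c is examined at every stage n with level_index n = c, and it is
  enumerated into the complement of the C_N instance as soon as it is refuted there.\<close>

definition LDL_to_CN_input :: "baire \<Rightarrow> nat list \<Rightarrow> nat" where
  "LDL_to_CN_input P xs =
     (if refuted P (xs ! 0) (level_index (xs ! 0)) then Suc (level_index (xs ! 0)) else 0)"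

lemma computable_fn_LDL_to_CN_input: "computable_fn 1 LDL_to_CN_input"
  unfolding LDL_to_CN_input_def refuted_def stage_count_def
  by (intro computable_fn_if computable_fn_less computable_fn_pow2 computable_fn_mult computable_fn_sum
      computable_fn_add computable_fn_oracle computable_fn_const computable_fn_code_length
      computable_fn_level_index computable_fn_proj computable_fn_Suc computable_fn_conj
      computable_fn_code_prefix computable_fn_diff computable_fn_nth_tl computable_fn_bounded_ex
      computable_fn_not computable_fn_eq computable_fn_nth_tl_tl) auto

lemma delta_LDL_to_CN_input:
  "delta_AN (\<lambda>n. LDL_to_CN_input P [n]) = Some {c. \<forall>n. level_index n = c \<longrightarrow> \<not> refuted P n c}"
  by (auto simp: delta_AN_def LDL_to_CN_input_def)

lemma LDL_sW_le_CN:
  "sW_le (delta_pair delta_AC delta_nat) delta_word LDL_dom LDL delta_AN delta_nat CN_dom CN"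
proof (rule sW_le_by_name_translation)
  show "computable (\<lambda>P. Some (\<lambda>n. LDL_to_CN_input P [n]))"
    by (rule computable_of_computable_fn[OF computable_fn_LDL_to_CN_input])
  show "computable (\<lambda>q. Some (\<lambda>n. q 0))"
    by (rule computable_of_computable_fn[OF computable_fn_oracle[OF computable_fn_zero]])
  fix P x assume "delta_pair delta_AC delta_nat P = Some x" "x \<in> LDL_dom"
  then have x: "x = (named_set P, P 1)" and pos: "0 < mu (named_set P)"
    by (auto simp: delta_AC_nat_named_set LDL_dom_def)
  show "\<exists>S. delta_AN (\<lambda>n. LDL_to_CN_input P [n]) = Some S \<and> S \<in> CN_dom \<and>
      (\<forall>q c. delta_nat q = Some c \<longrightarrow> c \<in> CN S \<longrightarrow>
         (\<exists>w. delta_word (\<lambda>n. q 0) = Some w \<and> w \<in> LDL x))"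
    using delta_LDL_to_CN_input ex_survivor[OF pos] survivor_Compl_small
    by (auto simp: CN_dom_def CN_def delta_nat_def delta_word_def x mem_LDL_iff sets_named_set)
qed

theorem theorem11p2:
  shows "sW_equiv (delta_pair delta_AC delta_nat) delta_word LDL_dom LDL
                  delta_AN delta_nat CN_dom CN"
  unfolding sW_equiv_def using LDL_sW_le_CN CN_sW_le_LDL by blast

end
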